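(* Fix $\theta$ with $\phi(\theta)<\beta$ and fix $Q\in\{0,1\}$. Then $$\lim_{\tau\to\tau^\star(\theta)^+}u(s_1(\theta,\tau))=\lim_{\tau\to\tau^\star(\theta)^-}u(s_2(\theta,\tau)).$$
   Context: Setup. Let $Q\in\{0,1\}$ be a random variable with $\mathbb P(Q=1)=\pi\in(0,1)$, and let $(\Theta,\Gamma)$ be a real-valued random vector whose conditional joint density given $Q=1$ is $h_q$ and given $Q=0$ is $h_u$, both strictly positive on $\mathbb R^2$. Monotone likelihood ratio assumption: $l(\theta,\gamma)=h_q(\theta,\gamma)/h_u(\theta,\gamma)$ is continuous and strictly increasing in each of $\theta$ and $\gamma$, and for each $\theta$ the map $\gamma\mapsto l(\theta,\gamma)$ has infimum $0$ and supremum $+\infty$. Fix payoffs $x_q>0$, $x_u>0$. For $\tau\in(-x_u,x_q)$ let $A(\tau)=\mathbb 1\{l(\Theta,\Gamma)>\frac{(1-\pi)(x_u+\tau)}{\pi(x_q-\tau)}\}$, $s_1(\theta,\tau)=\mathbb E[Q\mid\Theta=\theta,A(\tau)=1]$, $s_2(\theta,\tau)=\mathbb E[A(\tau)\mid\Theta=\theta]$, $\phi(\theta)=\mathbb P(Q=1\mid\Theta=\theta)$. The equalizing prejudice $\tau^\star(\theta)$ is the unique $\tau\in(-x_u,x_q)$ with $s_1(\theta,\tau)=s_2(\theta,\tau)$. Regret. Fix a cutoff $c\in(-x_u,x_q)$ and let $\beta=(x_u+c)/(x_q+x_u)\in(0,1)$. For a score value $s\in[0,1]$ and a qualification value $Q\in\{0,1\}$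 define $\mathcal N(s)=sx_q-(1-s)x_u$, $A'(s)=\mathbb 1\{\mathcal N(s)>c\}$ (i.e. $s>\beta$), $\mathcal P(s)=A'(s)(Qx_q-(1-Q)x_u)$, and the individual regret $u(s)=\mathcal N(s)-\mathcal P(s)$. For a fixed applicant $(\theta,Q)$, $u(s_k(\theta,\tau))$ is viewed as a function of $\tau\in(-x_u,x_q)$. *)

theory Defs
  imports "HOL-Analysis.Analysis"
begin

definition lr :: "(real \<Rightarrow> real \<Rightarrow> real) \<Rightarrow> (real \<Rightarrow> real \<Rightarrow> real) \<Rightarrow> real \<Rightarrow> real \<Rightarrow> real" where
  "lr hq hu \<theta> \<gamma> = hq \<theta> \<gamma> / hu \<theta> \<gamma>"

definition thr :: "real \<Rightarrow> real \<Rightarrow> real \<Rightarrow> real \<Rightarrow> real" where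
  "thr \<pi> xq xu \<tau> = (1 - \<pi>) * (xu + \<tau>) / (\<pi> * (xq - \<tau>))"

definition accmass :: "(real \<Rightarrow> real \<Rightarrow> real) \<Rightarrow> (real \<Rightarrow> real \<Rightarrow> real) \<Rightarrow> (real \<Rightarrow> real \<Rightarrow> real)
     \<Rightarrow> real \<Rightarrow> real \<Rightarrow> real \<Rightarrow> real \<Rightarrow> real \<Rightarrow> real" where
  "accmass h hq hu \<pi> xq xu \<theta> \<tau> =
     (LINT \<gamma>|lborel. indicator {\<gamma>. lr hq hu \<theta> \<gamma> > thr \<pi> xq xu \<tau>} \<gamma> * h \<theta> \<gamma>)"

text \<open>s_1(theta,tau) = E[Q | Theta = theta, A(tau) = 1].\<close>
definition s1 :: "(real \<Rightarrow> real \<Rightarrow> real) \<Rightarrow> (real \<Rightarrow> real \<Rightarrow> real) \<Rightarrow> real \<Rightarrow> real \<Rightarrow> real \<Rightarrow> real \<Rightarrow> real \<Rightarrow> real" where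
  "s1 hq hu \<pi> xq xu \<theta> \<tau> =
     (\<pi> * accmass hq hq hu \<pi> xq xu \<theta> \<tau>) /
     (\<pi> * accmass hq hq hu \<pi> xq xu \<theta> \<tau> + (1 - \<pi>) * accmass hu hq hu \<pi> xq xu \<theta> \<tau>)"

text \<open>s_2(theta,tau) = E[A(tau) | Theta = theta].\<close>
definition s2 :: "(real \<Rightarrow> real \<Rightarrow> real) \<Rightarrow> (real \<Rightarrow> real \<Rightarrow> real) \<Rightarrow> real \<Rightarrow> real \<Rightarrow> real \<Rightarrow> real \<Rightarrow> real \<Rightarrow> real" where
  "s2 hq hu \<pi> xq xu \<theta> \<tau> =
     (\<pi> * accmass hq hq hu \<pi> xq xu \<theta> \<tau> + (1 - \<pi>) * accmass hu hq hu \<pi> xq xu \<theta> \<tau>) /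
     (\<pi> * (LINT \<gamma>|lborel. hq \<theta> \<gamma>) + (1 - \<pi>) * (LINT \<gamma>|lborel. hu \<theta> \<gamma>))"

text \<open>phi(theta) = P(Q = 1 | Theta = theta).\<close>
definition phi :: "(real \<Rightarrow> real \<Rightarrow> real) \<Rightarrow> (real \<Rightarrow> real \<Rightarrow> real) \<Rightarrow> real \<Rightarrow> real \<Rightarrow> real" where
  "phi hq hu \<pi> \<theta> =
     (\<pi> * (LINT \<gamma>|lborel. hq \<theta> \<gamma>)) /
     (\<pi> * (LINT \<gamma>|lborel. hq \<theta> \<gamma>) + (1 - \<pi>) * (LINT \<gamma>|lborel. hu \<theta> \<gamma>))"

definition tau_star :: "(real \<Rightarrow> real \<Rightarrow> real) \<Rightarrow> (real \<Rightarrow> real \<Rightarrow> real) \<Rightarrow> real \<Rightarrow> real \<Rightarrow> real \<Rightarrow> real \<Rightarrow> real" where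
  "tau_star hq hu \<pi> xq xu \<theta> =
     (THE \<tau>. - xu < \<tau> \<and> \<tau> < xq \<and> s1 hq hu \<pi> xq xu \<theta> \<tau> = s2 hq hu \<pi> xq xu \<theta> \<tau>)"

definition netv :: "real \<Rightarrow> real \<Rightarrow> real \<Rightarrow> real" where
  "netv xq xu s = s * xq - (1 - s) * xu"

definition accept' :: "real \<Rightarrow> real \<Rightarrow> real \<Rightarrow> real \<Rightarrow> real" where
  "accept' xq xu c s = (if netv xq xu s > c then 1 else 0)"

definition payoff :: "real \<Rightarrow> real \<Rightarrow> real \<Rightarrow> real \<Rightarrow> real \<Rightarrow> real" where
  "payoff xq xu c Q s = accept' xq xu c s * (Q * xq - (1 - Q) * xu)"

definition regret :: "real \<Rightarrow> real \<Rightarrow> real \<Rightarrow> real \<Rightarrow> real \<Rightarrow> real" where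
  "regret xq xu c Q s = netv xq xu s - payoff xq xu c Q s"

end

theory Submission
  imports Defs
begin

text \<open>
  Reparametrize the prejudice \<tau> by the cutoff \<gamma>(\<tau>) solving l(\<theta>, \<gamma>) = thr(\<tau>): the
  acceptance region at \<theta> is the half-line above \<gamma>(\<tau>), and \<gamma> is a continuous increasing
  bijection from (-x_u, x_q) onto the real line. As functions of the cutoff, the precision s_1
  is strictly increasing (monotone likelihood ratio) and the acceptance rate s_2 strictly
  decreasing, both continuous, so they cross exactly once, at \<gamma>(\<tau>*). Hence s_1 decreases to the
  common score s* as \<tau> decreases to \<tau>*, and s_2 decreases to s* as \<tau> increases to \<tau>*. Both limits
  in the theorem are therefore the right limit of the regret at s*, which exists because the
  acceptance indicator is eventually constant to the right of any score.
\<close>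

lemma strict_mono_continuous_attains:
  fixes L :: "real \<Rightarrow> real"
  assumes "strict_mono L" "\<And>x. isCont L x" "L a < y" "y < L b"
  shows "\<exists>g. L g = y"
proof -
  have "a \<le> b" using assms strict_mono_less[OF assms(1), of b a] by force
  then show ?thesis using IVT[of L a y b] assms by auto
qed

lemma isCont_inv_strict_mono:
  fixes L :: "real \<Rightarrow> real"
  assumes "strict_mono L" "\<And>x. isCont L x"
  shows "isCont (inv L) (L x)"
proof (rule isCont_inverse_function[where f=L and g="inv L" and d=1])
  show "inv L (L z) = z" if "\<bar>z - x\<bar> \<le> 1" for z
    by (rule inv_f_f[OF strict_mono_imp_inj_on[OF assms(1)]])
  show "isCont L z" if "\<bar>z - x\<bar> \<le> 1" for z
    by (rule assms(2))
qed simp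

lemma isCont_section:
  fixes F :: "real \<Rightarrow> real \<Rightarrow> real"
  assumes "continuous_on UNIV (\<lambda>p::real \<times> real. F (fst p) (snd p))"
  shows "isCont (F t) x"
proof -
  have "continuous_on UNIV (\<lambda>x. F (fst (t, x)) (snd (t, x)))"
    by (rule continuous_on_compose2[OF assms])
      (auto intro!: continuous_on_Pair continuous_on_const continuous_on_id)
  then show ?thesis by (simp add: continuous_on_eq_continuous_at)
qed

lemma filterlim_at_right_if_isCont:
  fixes f :: "real \<Rightarrow> real"
  assumes "isCont f x" "F \<le> at x" "eventually (\<lambda>y. f x < f y) F"
  shows "filterlim f (at_right (f x)) F"
  using assms by (intro tendsto_imp_filterlim_at_right) (auto simp: isCont_def intro: tendsto_mono)

definition tail_integral :: "(real \<Rightarrow> real) \<Rightarrow> real \<Rightarrow> real" where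
  "tail_integral f z = (LINT x|lborel. indicator {z<..} x * f x)"

lemma integrable_indicator_mult:
  fixes f :: "real \<Rightarrow> real"
  assumes "integrable lborel f" "S \<in> sets borel"
  shows "integrable lborel (\<lambda>x. indicator S x * f x)"
  using integrable_real_mult_indicator[of S lborel f] assms by (simp add: mult.commute)

lemma tail_integral_tendsto_sequentially:
  fixes f :: "real \<Rightarrow> real"
  assumes f: "integrable lborel f" and S: "S \<in> sets borel"
    and lim: "AE x in lborel. (\<lambda>n. indicator {X n<..} x :: real) \<longlonglongrightarrow> indicator S x"
  shows "(\<lambda>n. tail_integral f (X n)) \<longlonglongrightarrow> (LINT x|lborel. indicator S x * f x)"
  unfolding tail_integral_def
proof (rule integral_dominated_convergence[where w="\<lambda>x. \<bar>f x\<bar>"])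
  show "AE x in lborel. (\<lambda>n. indicator {X n<..} x * f x) \<longlonglongrightarrow> indicator S x * f x"
    using lim by eventually_elim (intro tendsto_mult tendsto_const)
  show "AE x in lborel. norm (indicator {X n<..} x * f x) \<le> \<bar>f x\<bar>" for n
    by (auto simp: indicator_def)
qed (use f S integrable_indicator_mult in auto)

lemma isCont_tail_integral:
  fixes f :: "real \<Rightarrow> real"
  assumes f: "integrable lborel f"
  shows "isCont (tail_integral f) z"
  unfolding isCont_def LIMSEQ_SEQ_conv[symmetric]
proof (intro allI impI, elim conjE)
  fix X :: "nat \<Rightarrow> real" assume X: "X \<longlonglongrightarrow> z"
  have "AE x in lborel. x \<noteq> z" by (rule AE_lborel_singleton)
  then have "AE x in lborel. (\<lambda>n. indicator {X n<..} x :: real) \<longlonglongrightarrow> indicator {z<..} x"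
  proof eventually_elim
    case (elim x)
    then have "eventually (\<lambda>n. (X n < x) = (z < x)) sequentially"
    proof (cases "z < x")
      case True
      with X show ?thesis by (auto elim: eventually_mono dest: order_tendstoD(2))
    next
      case False
      with elim have "x < z" by simp
      from order_tendstoD(1)[OF X this] show ?thesis by eventually_elim (use \<open>x < z\<close> in auto)
    qed
    then show ?case
      by (rule tendsto_eventually[OF eventually_mono]) (simp add: indicator_def)
  qed
  then show "(\<lambda>n. tail_integral f (X n)) \<longlonglongrightarrow> tail_integral f z"
    using tail_integral_tendsto_sequentially[OF f] by (simp add: tail_integral_def)
qed

lemma tail_integral_at_top:
  fixes f :: "real \<Rightarrow> real"
  assumes f: "integrable lborel f"
  shows "(tail_integral f \<longlongrightarrow> 0) at_top"
proof (rule tendsto_at_topI_sequentially)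
  fix X :: "nat \<Rightarrow> real" assume X: "filterlim X at_top sequentially"
  have "AE x in lborel. (\<lambda>n. indicator {X n<..} x :: real) \<longlonglongrightarrow> indicator {} x"
  proof (rule AE_I2)
    fix x
    have "eventually (\<lambda>n. x \<le> X n) sequentially" using X by (simp add: filterlim_at_top)
    then show "(\<lambda>n. indicator {X n<..} x :: real) \<longlonglongrightarrow> indicator {} x"
      by (rule tendsto_eventually[OF eventually_mono]) simp
  qed
  from tail_integral_tendsto_sequentially[OF f _ this]
  show "(\<lambda>n. tail_integral f (X n)) \<longlonglongrightarrow> 0" by simp
qed

lemma tail_integral_at_bot:
  fixes f :: "real \<Rightarrow> real"
  assumes f: "integrable lborel f"
  shows "(tail_integral f \<longlongrightarrow> (LINT x|lborel. f x)) at_bot"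
proof (rule tendsto_at_botI_sequentially)
  fix X :: "nat \<Rightarrow> real" assume X: "filterlim X at_bot sequentially"
  have "AE x in lborel. (\<lambda>n. indicator {X n<..} x :: real) \<longlonglongrightarrow> indicator UNIV x"
  proof (rule AE_I2)
    fix x
    have "eventually (\<lambda>n. X n < x) sequentially" using X by (simp add: filterlim_at_bot_dense)
    then show "(\<lambda>n. indicator {X n<..} x :: real) \<longlonglongrightarrow> indicator UNIV x"
      by (rule tendsto_eventually[OF eventually_mono]) simp
  qed
  from tail_integral_tendsto_sequentially[OF f _ this]
  show "(\<lambda>n. tail_integral f (X n)) \<longlonglongrightarrow> (LINT x|lborel. f x)" by simp
qed

lemma integral_indicator_pos:
  fixes g :: "real \<Rightarrow> real"
  assumes g: "integrable lborel g" and S: "S \<in> sets borel" "{a<..<b} \<subseteq> S" and "a < b"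
    and g_pos: "\<And>x. x \<in> S \<Longrightarrow> 0 < g x"
  shows "0 < (LINT x|lborel. indicator S x * g x)"
proof -
  have int: "integrable lborel (\<lambda>x. indicator S x * g x)"
    using integrable_indicator_mult[OF g S(1)] .
  have nonneg: "AE x in lborel. 0 \<le> indicator S x * g x"
    using g_pos by (auto simp: indicator_def intro!: AE_I2 less_imp_le)
  have "(LINT x|lborel. indicator S x * g x) \<noteq> 0"
  proof
    assume "(LINT x|lborel. indicator S x * g x) = 0"
    then have "AE x in lborel. indicator S x * g x = 0"
      using integral_nonneg_eq_0_iff_AE[OF int nonneg] by simp
    then have "AE x in lborel. x \<notin> {a<..<b}"
      by eventually_elim (use S g_pos in \<open>fastforce simp: indicator_def\<close>)
    then have "emeasure lborel {a<..<b} = 0"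
      by (subst (asm) AE_iff_measurable[of "{a<..<b}"]) auto
    then show False using \<open>a < b\<close> by simp
  qed
  then show ?thesis using integral_nonneg_AE[OF nonneg] by simp
qed

lemma integral_indicator_le_mult:
  fixes f h :: "real \<Rightarrow> real"
  assumes "integrable lborel f" "integrable lborel h" "S \<in> sets borel"
    and "\<And>x. x \<in> S \<Longrightarrow> f x \<le> c * h x"
  shows "(LINT x|lborel. indicator S x * f x) \<le> c * (LINT x|lborel. indicator S x * h x)"
proof -
  have "(LINT x|lborel. indicator S x * f x) \<le> (LINT x|lborel. c * (indicator S x * h x))"
    using assms integrable_indicator_mult[of f S] integrable_indicator_mult[of h S]
    by (intro integral_mono) (auto simp: indicator_def)
  then show ?thesis by simp
qed

lemma integral_indicator_less_mult:
  fixes f h :: "real \<Rightarrow> real"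
  assumes f: "integrable lborel f" and h: "integrable lborel h"
    and S: "S \<in> sets borel" "{a<..<b} \<subseteq> S" "a < b"
    and less: "\<And>x. x \<in> S \<Longrightarrow> c * h x < f x"
  shows "c * (LINT x|lborel. indicator S x * h x) < (LINT x|lborel. indicator S x * f x)"
proof -
  have "0 < (LINT x|lborel. indicator S x * (f x - c * h x))"
    using f h S less by (intro integral_indicator_pos) auto
  also have "\<dots> = (LINT x|lborel. indicator S x * f x - c * (indicator S x * h x))"
    by (simp add: algebra_simps)
  also have "\<dots> = (LINT x|lborel. indicator S x * f x) - c * (LINT x|lborel. indicator S x * h x)"
    using f h S by (simp add: integrable_indicator_mult)
  finally show ?thesis by simp
qed

lemma tail_integral_pos:
  fixes f :: "real \<Rightarrow> real"
  assumes "integrable lborel f" "\<And>x. 0 < f x"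
  shows "0 < tail_integral f z"
  unfolding tail_integral_def using assms by (intro integral_indicator_pos[where a=z and b="z+1"]) auto

lemma tail_integral_diff:
  fixes f :: "real \<Rightarrow> real"
  assumes f: "integrable lborel f" and "z1 \<le> z2"
  shows "tail_integral f z1 - tail_integral f z2 = (LINT x|lborel. indicator {z1<..z2} x * f x)"
proof -
  have "tail_integral f z1 - tail_integral f z2
      = (LINT x|lborel. indicator {z1<..} x * f x - indicator {z2<..} x * f x)"
    unfolding tail_integral_def using f by (simp add: integrable_indicator_mult)
  also have "\<dots> = (LINT x|lborel. indicator {z1<..z2} x * f x)"
    by (rule Bochner_Integration.integral_cong)
      (use \<open>z1 \<le> z2\<close> in \<open>auto simp: indicator_def\<close>)
  finally show ?thesis .
qed

lemma tail_integral_strict_antimono: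
  fixes f :: "real \<Rightarrow> real"
  assumes f: "integrable lborel f" "\<And>x. 0 < f x" and "z1 < z2"
  shows "tail_integral f z2 < tail_integral f z1"
proof -
  have "0 < (LINT x|lborel. indicator {z1<..z2} x * f x)"
    using assms by (intro integral_indicator_pos[where a=z1 and b=z2]) auto
  then show ?thesis using tail_integral_diff[OF f(1), of z1 z2] \<open>z1 < z2\<close> by simp
qed

text \<open>Monotone likelihood ratio: with c = f(z2)/h(z2), the mass of f on (z1,z2] is at most
  c times that of h, while beyond z2 it exceeds c times that of h.\<close>
lemma tail_integral_mlr:
  fixes f h :: "real \<Rightarrow> real"
  assumes f: "integrable lborel f" "\<And>x. 0 < f x"
    and h: "integrable lborel h" "\<And>x. 0 < h x"
    and mlr: "strict_mono (\<lambda>x. f x / h x)" and "z1 < z2"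
  shows "tail_integral f z1 * tail_integral h z2 < tail_integral f z2 * tail_integral h z1"
proof -
  define c where "c = f z2 / h z2"
  define F1 where "F1 = tail_integral f z1"
  define F2 where "F2 = tail_integral f z2"
  define H1 where "H1 = tail_integral h z1"
  define H2 where "H2 = tail_integral h z2"
  note defs = F1_def F2_def H1_def H2_def
  have "f x \<le> c * h x" if "x \<le> z2" for x
    using strict_mono_less_eq[OF mlr, of x z2] that h(2)[of x] by (simp add: c_def divide_le_eq)
  then have "(LINT x|lborel. indicator {z1<..z2} x * f x)
      \<le> c * (LINT x|lborel. indicator {z1<..z2} x * h x)"
    using f h by (intro integral_indicator_le_mult) auto
  then have middle: "F1 - F2 \<le> c * (H1 - H2)"
    using f h \<open>z1 < z2\<close> by (simp add: defs tail_integral_diff)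
  have "c * h x < f x" if "z2 < x" for x
    using strict_mono_less[OF mlr, of z2 x] that h(2)[of x] by (simp add: c_def less_divide_eq)
  then have tail: "c * H2 < F2"
    unfolding defs tail_integral_def
    using f h by (intro integral_indicator_less_mult[where a=z2 and b="z2+1"]) auto
  have "0 < H2" "H2 < H1"
    using tail_integral_pos[OF h] tail_integral_strict_antimono[OF h \<open>z1 < z2\<close>]
    by (auto simp: defs)
  have "F1 * H2 \<le> (F2 + c * (H1 - H2)) * H2"
    using middle \<open>0 < H2\<close> by (intro mult_right_mono) auto
  also have "\<dots> = F2 * H2 + (H1 - H2) * (c * H2)" by (simp add: algebra_simps)
  also have "\<dots> < F2 * H2 + (H1 - H2) * F2"
    using tail \<open>H2 < H1\<close> by simp
  finally show ?thesis by (simp add: defs algebra_simps)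
qed

locale mlr_densities =
  fixes f h :: "real \<Rightarrow> real" and p :: real
  assumes f_integrable: "integrable lborel f" and f_pos: "\<And>x. 0 < f x"
    and h_integrable: "integrable lborel h" and h_pos: "\<And>x. 0 < h x"
    and ratio_strict_mono: "strict_mono (\<lambda>x. f x / h x)"
    and p_pos: "0 < p" and p_less_1: "p < 1"
begin

definition accepted_mass :: "real \<Rightarrow> real" where
  "accepted_mass z = p * tail_integral f z + (1 - p) * tail_integral h z"

definition total_mass :: real where
  "total_mass = p * (LINT x|lborel. f x) + (1 - p) * (LINT x|lborel. h x)"

definition precision :: "real \<Rightarrow> real" where
  "precision z = p * tail_integral f z / accepted_mass z"

definition acceptance_rate :: "real \<Rightarrow> real" where
  "acceptance_rate z = accepted_mass z / total_mass"

definition base_rate :: real where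
  "base_rate = p * (LINT x|lborel. f x) / total_mass"

lemma integral_f_pos: "0 < (LINT x|lborel. f x)"
  using integral_indicator_pos[OF f_integrable, of UNIV 0 1] f_pos by simp

lemma integral_h_pos: "0 < (LINT x|lborel. h x)"
  using integral_indicator_pos[OF h_integrable, of UNIV 0 1] h_pos by simp

lemma total_mass_pos: "0 < total_mass"
  unfolding total_mass_def using integral_f_pos integral_h_pos p_pos p_less_1 by (simp add: add_pos_pos)

lemma accepted_mass_pos: "0 < accepted_mass z"
  unfolding accepted_mass_def
  using tail_integral_pos[OF f_integrable f_pos] tail_integral_pos[OF h_integrable h_pos] p_pos p_less_1
  by (simp add: add_pos_pos)

lemma precision_strict_mono: "strict_mono precision"
proof (rule strict_monoI)
  fix z1 z2 :: real assume "z1 < z2"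
  have "p * (1 - p) * (tail_integral f z1 * tail_integral h z2)
      < p * (1 - p) * (tail_integral f z2 * tail_integral h z1)"
    using tail_integral_mlr[OF f_integrable f_pos h_integrable h_pos ratio_strict_mono \<open>z1 < z2\<close>]
      p_pos p_less_1 by simp
  then have "p * tail_integral f z1 * accepted_mass z2 < p * tail_integral f z2 * accepted_mass z1"
    unfolding accepted_mass_def by (simp add: algebra_simps)
  then show "precision z1 < precision z2"
    unfolding precision_def using accepted_mass_pos[of z1] accepted_mass_pos[of z2]
    by (simp add: divide_less_eq less_divide_eq mult.commute mult.left_commute)
qed

lemma acceptance_rate_strict_antimono: "z1 < z2 \<Longrightarrow> acceptance_rate z2 < acceptance_rate z1"
  unfolding acceptance_rate_def accepted_mass_def
  using tail_integral_strict_antimono[OF f_integrable f_pos, of z1 z2]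
    tail_integral_strict_antimono[OF h_integrable h_pos, of z1 z2] p_pos p_less_1 total_mass_pos
  by (intro divide_strict_right_mono add_strict_mono) auto

lemma isCont_precision: "isCont precision z"
  unfolding precision_def[abs_def] accepted_mass_def
  using accepted_mass_pos[of z] unfolding accepted_mass_def
  by (intro continuous_intros isCont_tail_integral f_integrable h_integrable) auto

lemma isCont_acceptance_rate: "isCont acceptance_rate z"
  unfolding acceptance_rate_def[abs_def] accepted_mass_def
  using total_mass_pos by (intro continuous_intros isCont_tail_integral f_integrable h_integrable) auto

lemma precision_at_bot: "(precision \<longlongrightarrow> base_rate) at_bot"
  unfolding precision_def[abs_def] accepted_mass_def base_rate_def
  using total_mass_pos unfolding total_mass_def
  by (intro tendsto_intros tail_integral_at_bot f_integrable h_integrable) auto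

lemma acceptance_rate_at_bot: "(acceptance_rate \<longlongrightarrow> 1) at_bot"
proof -
  have "(acceptance_rate \<longlongrightarrow> total_mass / total_mass) at_bot"
    unfolding acceptance_rate_def[abs_def] accepted_mass_def
    using total_mass_pos unfolding total_mass_def
    by (intro tendsto_intros tail_integral_at_bot f_integrable h_integrable) auto
  then show ?thesis using total_mass_pos by simp
qed

lemma acceptance_rate_at_top: "(acceptance_rate \<longlongrightarrow> 0) at_top"
proof -
  have "(acceptance_rate \<longlongrightarrow> (p * 0 + (1 - p) * 0) / total_mass) at_top"
    unfolding acceptance_rate_def[abs_def] accepted_mass_def
    using total_mass_pos by (intro tendsto_intros tail_integral_at_top f_integrable h_integrable) auto
  then show ?thesis by simp
qed

lemma base_rate_pos: "0 < base_rate"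
  unfolding base_rate_def using p_pos integral_f_pos total_mass_pos by simp

lemma base_rate_less_1: "base_rate < 1"
  unfolding base_rate_def using total_mass_pos p_less_1 integral_h_pos
  by (simp add: divide_less_eq total_mass_def)

lemma base_rate_le_precision: "base_rate \<le> precision z"
proof (rule tendsto_upperbound[OF precision_at_bot])
  show "eventually (\<lambda>y. precision y \<le> precision z) at_bot"
    unfolding eventually_at_bot_linorder
    using strict_mono_less_eq[OF precision_strict_mono] by blast
qed simp

text \<open>The difference precision - acceptance rate is strictly increasing and continuous; it tends
  to base_rate - 1 < 0 at -\<infinity>, and is eventually positive at +\<infinity> because the acceptance rate
  tends to 0 while the precision stays above base_rate > 0.\<close>
lemma ex1_precision_eq_acceptance_rate: "\<exists>!z. precision z = acceptance_rate z"
proof -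
  define D where "D z = precision z - acceptance_rate z" for z
  have D_strict_mono: "strict_mono D"
    unfolding D_def by (rule strict_monoI)
      (use strict_monoD[OF precision_strict_mono] acceptance_rate_strict_antimono in force)
  have "(D \<longlongrightarrow> base_rate - 1) at_bot"
    unfolding D_def[abs_def] by (intro tendsto_intros precision_at_bot acceptance_rate_at_bot)
  then have "eventually (\<lambda>z. D z < 0) at_bot" using base_rate_less_1 by (intro order_tendstoD) auto
  then obtain z1 where z1: "D z1 < 0" unfolding eventually_at_bot_linorder by auto
  have "eventually (\<lambda>z. acceptance_rate z < base_rate) at_top"
    using acceptance_rate_at_top base_rate_pos by (intro order_tendstoD) auto
  then obtain z2 where "acceptance_rate z2 < base_rate" unfolding eventually_at_top_linorder by auto
  then have z2: "0 < D z2" using base_rate_le_precision[of z2] unfolding D_def by simp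
  then have "z1 \<le> z2" using z1 strict_mono_less[OF D_strict_mono, of z2 z1] by force
  moreover have "isCont D x" for x
    unfolding D_def[abs_def] by (intro continuous_intros isCont_precision isCont_acceptance_rate)
  ultimately obtain z where "D z = 0" using IVT[of D z1 0 z2] z1 z2 by auto
  then show ?thesis
    using strict_mono_eq[OF D_strict_mono] unfolding D_def by (metis eq_iff_diff_eq_0)
qed

lemma filterlim_precision_comp_at_right:
  fixes G :: "real \<Rightarrow> real"
  assumes G: "strict_mono_on {a<..<b} G" "isCont G \<tau>0" and \<tau>0: "\<tau>0 \<in> {a<..<b}"
  shows "filterlim (\<lambda>\<tau>. precision (G \<tau>)) (at_right (precision (G \<tau>0))) (at_right \<tau>0)"
proof (rule filterlim_at_right_if_isCont[where f="\<lambda>\<tau>. precision (G \<tau>)"])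
  show "isCont (\<lambda>\<tau>. precision (G \<tau>)) \<tau>0" using G(2) isCont_precision by (rule isCont_o2)
  have "eventually (\<lambda>\<tau>. \<tau> \<in> {\<tau>0<..<b}) (at_right \<tau>0)"
    using \<tau>0 by (intro eventually_at_right_real) auto
  then show "eventually (\<lambda>\<tau>. precision (G \<tau>0) < precision (G \<tau>)) (at_right \<tau>0)"
    by eventually_elim
      (use \<tau>0 in \<open>auto intro!: strict_monoD[OF precision_strict_mono] strict_mono_onD[OF G(1)]\<close>)
qed (simp add: at_le)

lemma filterlim_acceptance_rate_comp_at_left:
  fixes G :: "real \<Rightarrow> real"
  assumes G: "strict_mono_on {a<..<b} G" "isCont G \<tau>0" and \<tau>0: "\<tau>0 \<in> {a<..<b}"
  shows "filterlim (\<lambda>\<tau>. acceptance_rate (G \<tau>))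
    (at_right (acceptance_rate (G \<tau>0))) (at_left \<tau>0)"
proof (rule filterlim_at_right_if_isCont[where f="\<lambda>\<tau>. acceptance_rate (G \<tau>)"])
  show "isCont (\<lambda>\<tau>. acceptance_rate (G \<tau>)) \<tau>0"
    using G(2) isCont_acceptance_rate by (rule isCont_o2)
  have "eventually (\<lambda>\<tau>. \<tau> \<in> {a<..<\<tau>0}) (at_left \<tau>0)"
    using \<tau>0 by (intro eventually_at_left_real) auto
  then show "eventually (\<lambda>\<tau>. acceptance_rate (G \<tau>0) < acceptance_rate (G \<tau>)) (at_left \<tau>0)"
    by eventually_elim
      (use \<tau>0 in \<open>auto intro!: acceptance_rate_strict_antimono strict_mono_onD[OF G(1)]\<close>)
qed (simp add: at_le)

end

lemma netv_strict_mono: "0 < xq + xu \<Longrightarrow> strict_mono (netv xq xu)"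
proof (rule strict_monoI)
  fix s t :: real assume "0 < xq + xu" "s < t"
  then have "s * (xq + xu) - xu < t * (xq + xu) - xu" by simp
  then show "netv xq xu s < netv xq xu t" by (simp add: netv_def algebra_simps)
qed

lemma netv_tendsto: "(netv xq xu \<longlongrightarrow> netv xq xu s) (at s within S)"
  unfolding netv_def[abs_def] by (intro tendsto_intros)

lemma eventually_accept'_at_right:
  assumes "0 < xq + xu"
  shows "eventually (\<lambda>s. accept' xq xu c s = (if c \<le> netv xq xu s0 then 1 else 0)) (at_right s0)"
proof -
  consider "c < netv xq xu s0" | "netv xq xu s0 < c" | "c = netv xq xu s0" by linarith
  then show ?thesis
  proof cases
    case 1
    from order_tendstoD(1)[OF netv_tendsto this] show ?thesis
      by eventually_elim (use 1 in \<open>auto simp: accept'_def\<close>)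
  next
    case 2
    from order_tendstoD(2)[OF netv_tendsto this] show ?thesis
      by eventually_elim (use 2 in \<open>auto simp: accept'_def\<close>)
  next
    case 3
    have "c < netv xq xu s" if "s0 < s" for s
      using 3 strict_monoD[OF netv_strict_mono[OF assms] that] by simp
    with eventually_at_right_less[of s0] show ?thesis
      by (auto simp: accept'_def 3 elim: eventually_mono)
  qed
qed

lemma regret_tendsto_at_right:
  assumes "0 < xq + xu"
  shows "(regret xq xu c Q \<longlongrightarrow>
      netv xq xu s0 - (if c \<le> netv xq xu s0 then 1 else 0) * (Q * xq - (1 - Q) * xu)) (at_right s0)"
proof -
  let ?a = "if c \<le> netv xq xu s0 then 1 else 0"
  have "((\<lambda>s. netv xq xu s - ?a * (Q * xq - (1 - Q) * xu)) \<longlongrightarrow>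
      netv xq xu s0 - ?a * (Q * xq - (1 - Q) * xu)) (at_right s0)"
    by (intro tendsto_intros netv_tendsto)
  then show ?thesis
    by (rule Lim_transform_eventually)
      (use eventually_accept'_at_right[OF assms, of c s0] in
        \<open>eventually_elim, simp add: regret_def payoff_def\<close>)
qed

lemma thr_pos:
  assumes "0 < \<pi>" "\<pi> < 1" "- xu < \<tau>" "\<tau> < xq"
  shows "0 < thr \<pi> xq xu \<tau>"
  using assms unfolding thr_def by (intro divide_pos_pos mult_pos_pos) auto

lemma thr_strict_mono_on:
  assumes "0 < \<pi>" "\<pi> < 1" "0 < xq + xu"
  shows "strict_mono_on {..<xq} (thr \<pi> xq xu)"
proof (rule strict_mono_onI)
  fix a b assume "a \<in> {..<xq}" "b \<in> {..<xq}" "a < b"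
  then have pos: "0 < (xq - a) * (xq - b)" by simp
  have "(xu + b) * (xq - a) - (xu + a) * (xq - b) = (b - a) * (xq + xu)"
    by (simp add: algebra_simps)
  moreover have "0 < (b - a) * (xq + xu)" using \<open>a < b\<close> assms(3) by simp
  ultimately have "(xu + a) * (xq - b) / ((xq - a) * (xq - b)) < (xu + b) * (xq - a) / ((xq - a) * (xq - b))"
    using pos by (intro divide_strict_right_mono) linarith+
  then have "(xu + a) / (xq - a) < (xu + b) / (xq - b)"
    using \<open>a \<in> {..<xq}\<close> \<open>b \<in> {..<xq}\<close> by simp
  then have "(1 - \<pi>) / \<pi> * ((xu + a) / (xq - a)) < (1 - \<pi>) / \<pi> * ((xu + b) / (xq - b))"
    using assms(1,2) by (intro mult_strict_left_mono) auto
  then show "thr \<pi> xq xu a < thr \<pi> xq xu b" by (simp add: thr_def)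
qed

lemma isCont_thr: "\<pi> \<noteq> 0 \<Longrightarrow> \<tau> \<noteq> xq \<Longrightarrow> isCont (thr \<pi> xq xu) \<tau>"
  unfolding thr_def[abs_def] by (intro continuous_intros) auto

lemma thr_surj:
  assumes "0 < \<pi>" "\<pi> < 1" "0 < xq" "0 < xu" "0 < y"
  shows "\<exists>\<tau>. - xu < \<tau> \<and> \<tau> < xq \<and> thr \<pi> xq xu \<tau> = y"
proof -
  define d where "d = y * \<pi> + (1 - \<pi>)"
  have "0 < d" using assms by (simp add: d_def add_pos_pos)
  define \<tau> where "\<tau> = (y * \<pi> * xq - (1 - \<pi>) * xu) / d"
  have lower: "xu + \<tau> = y * \<pi> * (xq + xu) / d"
    using \<open>0 < d\<close> by (simp add: \<tau>_def d_def field_simps)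
  have upper: "xq - \<tau> = (1 - \<pi>) * (xq + xu) / d"
    using \<open>0 < d\<close> by (simp add: \<tau>_def d_def field_simps)
  have "0 < xu + \<tau>" "0 < xq - \<tau>"
    unfolding lower upper using assms \<open>0 < d\<close> by auto
  moreover have "thr \<pi> xq xu \<tau> = y"
  proof -
    have "(1 - \<pi>) * (y * \<pi> * (xq + xu) / d) = y * (\<pi> * ((1 - \<pi>) * (xq + xu) / d))"
      by (simp add: field_simps)
    moreover have "\<pi> * ((1 - \<pi>) * (xq + xu) / d) \<noteq> 0" using assms \<open>0 < d\<close> by simp
    ultimately show ?thesis unfolding thr_def lower upper by simp
  qed
  ultimately show ?thesis by (intro exI[of _ \<tau>]) auto
qed

text \<open>The acceptance region {\<gamma>. L \<gamma> > thr \<pi> xq xu \<tau>} is the half-line above this cutoff.\<close>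
definition cutoff :: "(real \<Rightarrow> real) \<Rightarrow> real \<Rightarrow> real \<Rightarrow> real \<Rightarrow> real \<Rightarrow> real" where
  "cutoff L \<pi> xq xu \<tau> = inv L (thr \<pi> xq xu \<tau>)"

context
  fixes L :: "real \<Rightarrow> real" and \<pi> xq xu :: real
  assumes L_strict_mono: "strict_mono L" and L_cont: "\<And>x. isCont L x"
    and L_pos: "\<And>x. 0 < L x"
    and L_inf: "\<forall>\<epsilon>>0. \<exists>g. L g < \<epsilon>" and L_sup: "\<forall>M. \<exists>g. M < L g"
    and \<pi>: "0 < \<pi>" "\<pi> < 1" and pay: "0 < xq" "0 < xu"
begin

lemma cutoff_eq_thr:
  assumes "\<tau> \<in> {- xu<..<xq}"
  shows "L (cutoff L \<pi> xq xu \<tau>) = thr \<pi> xq xu \<tau>"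
proof -
  have pos: "0 < thr \<pi> xq xu \<tau>" using thr_pos \<pi> assms by auto
  obtain a b where "L a < thr \<pi> xq xu \<tau>" "thr \<pi> xq xu \<tau> < L b"
    using L_inf L_sup pos by blast
  then have "thr \<pi> xq xu \<tau> \<in> range L"
    using strict_mono_continuous_attains[OF L_strict_mono L_cont] by (metis rangeI)
  then show ?thesis unfolding cutoff_def by (rule f_inv_into_f)
qed

lemma cutoff_strict_mono_on: "strict_mono_on {- xu<..<xq} (cutoff L \<pi> xq xu)"
proof (rule strict_mono_onI)
  fix a b assume ab: "a \<in> {- xu<..<xq}" "b \<in> {- xu<..<xq}" "a < b"
  then have "thr \<pi> xq xu a < thr \<pi> xq xu b"
    using pay by (intro strict_mono_onD[OF thr_strict_mono_on[OF \<pi>]]) auto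
  then have "L (cutoff L \<pi> xq xu a) < L (cutoff L \<pi> xq xu b)"
    using ab by (simp only: cutoff_eq_thr)
  then show "cutoff L \<pi> xq xu a < cutoff L \<pi> xq xu b"
    by (simp only: strict_mono_less[OF L_strict_mono])
qed

lemma isCont_cutoff:
  assumes "\<tau> \<in> {- xu<..<xq}"
  shows "isCont (cutoff L \<pi> xq xu) \<tau>"
proof -
  have "isCont (thr \<pi> xq xu) \<tau>" using \<pi> assms by (intro isCont_thr) auto
  moreover have "isCont (inv L) (thr \<pi> xq xu \<tau>)"
    using isCont_inv_strict_mono[OF L_strict_mono L_cont, of "cutoff L \<pi> xq xu \<tau>"]
    by (simp only: cutoff_eq_thr[OF assms])
  ultimately show ?thesis unfolding cutoff_def[abs_def] by (rule isCont_o2)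
qed

lemma cutoff_surj: "\<exists>\<tau>\<in>{- xu<..<xq}. cutoff L \<pi> xq xu \<tau> = z"
proof -
  obtain \<tau> where \<tau>: "\<tau> \<in> {- xu<..<xq}" "thr \<pi> xq xu \<tau> = L z"
    using thr_surj[OF \<pi> pay L_pos] by auto
  then have "cutoff L \<pi> xq xu \<tau> = z"
    unfolding cutoff_def by (simp add: inv_f_f strict_mono_imp_inj_on[OF L_strict_mono])
  with \<tau> show ?thesis by blast
qed

end

lemma accmass_eq_tail_integral:
  assumes "strict_mono (lr hq hu \<theta>)" "lr hq hu \<theta> g = thr \<pi> xq xu \<tau>"
  shows "accmass k hq hu \<pi> xq xu \<theta> \<tau> = tail_integral (k \<theta>) g"
proof -
  have "{\<gamma>. thr \<pi> xq xu \<tau> < lr hq hu \<theta> \<gamma>} = {g<..}"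
    using strict_mono_less[OF assms(1), of g] by (auto simp flip: assms(2))
  then show ?thesis unfolding accmass_def tail_integral_def by simp
qed

locale mlr_screening =
  fixes hq hu :: "real \<Rightarrow> real \<Rightarrow> real" and \<pi> xq xu \<theta> :: real
  assumes \<pi>: "0 < \<pi>" "\<pi> < 1" and pay: "0 < xq" "0 < xu"
    and hq_pos: "\<And>g. 0 < hq \<theta> g" and hu_pos: "\<And>g. 0 < hu \<theta> g"
    and hq_integrable: "integrable lborel (hq \<theta>)"
    and hu_integrable: "integrable lborel (hu \<theta>)"
    and lr_strict_mono: "strict_mono (lr hq hu \<theta>)"
    and isCont_lr: "\<And>g. isCont (lr hq hu \<theta>) g"
    and lr_inf: "\<forall>\<epsilon>>0. \<exists>g. lr hq hu \<theta> g < \<epsilon>"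
    and lr_sup: "\<forall>M. \<exists>g. M < lr hq hu \<theta> g"
begin

sublocale mlr_densities "hq \<theta>" "hu \<theta>" \<pi>
  using hq_pos hu_pos hq_integrable hu_integrable lr_strict_mono \<pi>
  by unfold_locales (auto simp: lr_def[abs_def])

lemma lr_pos: "0 < lr hq hu \<theta> g"
  using hq_pos hu_pos by (simp add: lr_def)

abbreviation acceptance_cutoff :: "real \<Rightarrow> real" where
  "acceptance_cutoff \<equiv> cutoff (lr hq hu \<theta>) \<pi> xq xu"

lemmas cutoff_assms = lr_strict_mono isCont_lr lr_pos lr_inf lr_sup \<pi> pay

lemma s1_eq_precision:
  "\<tau> \<in> {- xu<..<xq} \<Longrightarrow> s1 hq hu \<pi> xq xu \<theta> \<tau> = precision (acceptance_cutoff \<tau>)"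
  unfolding s1_def precision_def accepted_mass_def
  by (simp add: accmass_eq_tail_integral[OF lr_strict_mono cutoff_eq_thr[OF cutoff_assms]])

lemma s2_eq_acceptance_rate:
  "\<tau> \<in> {- xu<..<xq} \<Longrightarrow> s2 hq hu \<pi> xq xu \<theta> \<tau> = acceptance_rate (acceptance_cutoff \<tau>)"
  unfolding s2_def acceptance_rate_def accepted_mass_def total_mass_def
  by (simp add: accmass_eq_tail_integral[OF lr_strict_mono cutoff_eq_thr[OF cutoff_assms]])

lemma tau_star_crossing:
  defines "\<tau>s \<equiv> tau_star hq hu \<pi> xq xu \<theta>"
  shows "\<tau>s \<in> {- xu<..<xq}"
    and "precision (acceptance_cutoff \<tau>s) = acceptance_rate (acceptance_cutoff \<tau>s)"
proof -
  obtain z0 where z0: "precision z0 = acceptance_rate z0"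
    and z0_unique: "\<And>z. precision z = acceptance_rate z \<Longrightarrow> z = z0"
    using ex1_precision_eq_acceptance_rate by blast
  obtain \<tau>0 where \<tau>0: "\<tau>0 \<in> {- xu<..<xq}" "acceptance_cutoff \<tau>0 = z0"
    using cutoff_surj[OF cutoff_assms] by blast
  have "\<tau>s = \<tau>0"
    unfolding \<tau>s_def tau_star_def
  proof (rule the_equality)
    show "- xu < \<tau>0 \<and> \<tau>0 < xq \<and> s1 hq hu \<pi> xq xu \<theta> \<tau>0 = s2 hq hu \<pi> xq xu \<theta> \<tau>0"
      using \<tau>0 z0 by (simp add: s1_eq_precision s2_eq_acceptance_rate)
    fix \<tau> assume "- xu < \<tau> \<and> \<tau> < xq \<and> s1 hq hu \<pi> xq xu \<theta> \<tau> = s2 hq hu \<pi> xq xu \<theta> \<tau>"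
    then have "\<tau> \<in> {- xu<..<xq}" "acceptance_cutoff \<tau> = acceptance_cutoff \<tau>0"
      using z0_unique \<tau>0 by (auto simp: s1_eq_precision s2_eq_acceptance_rate)
    then show "\<tau> = \<tau>0"
      using strict_mono_on_eqD[OF cutoff_strict_mono_on[OF cutoff_assms]] \<tau>0 by metis
  qed
  with \<tau>0 z0 show "\<tau>s \<in> {- xu<..<xq}"
    and "precision (acceptance_cutoff \<tau>s) = acceptance_rate (acceptance_cutoff \<tau>s)" by auto
qed

lemma s1_filterlim_at_right:
  defines "\<tau>s \<equiv> tau_star hq hu \<pi> xq xu \<theta>"
  shows "filterlim (s1 hq hu \<pi> xq xu \<theta>)
    (at_right (precision (acceptance_cutoff \<tau>s))) (at_right \<tau>s)"
proof -
  have "eventually (\<lambda>\<tau>. \<tau> \<in> {- xu<..<xq}) (at_right \<tau>s)"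
    using tau_star_crossing(1) eventually_at_right_real[of \<tau>s xq]
    by (auto simp: \<tau>s_def elim: eventually_mono)
  then show ?thesis
    using filterlim_precision_comp_at_right[OF cutoff_strict_mono_on[OF cutoff_assms]
        isCont_cutoff[OF cutoff_assms tau_star_crossing(1)] tau_star_crossing(1)]
    by (subst filterlim_cong[OF refl refl])
      (auto simp: \<tau>s_def s1_eq_precision elim: eventually_mono)
qed

lemma s2_filterlim_at_left:
  defines "\<tau>s \<equiv> tau_star hq hu \<pi> xq xu \<theta>"
  shows "filterlim (s2 hq hu \<pi> xq xu \<theta>)
    (at_right (precision (acceptance_cutoff \<tau>s))) (at_left \<tau>s)"
proof -
  have "eventually (\<lambda>\<tau>. \<tau> \<in> {- xu<..<xq}) (at_left \<tau>s)"
    using tau_star_crossing(1) eventually_at_left_real[of "- xu" \<tau>s]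
    by (auto simp: \<tau>s_def elim: eventually_mono)
  then show ?thesis
    using filterlim_acceptance_rate_comp_at_left[OF cutoff_strict_mono_on[OF cutoff_assms]
        isCont_cutoff[OF cutoff_assms tau_star_crossing(1)] tau_star_crossing(1)] tau_star_crossing(2)
    by (subst filterlim_cong[OF refl refl])
      (auto simp: \<tau>s_def s2_eq_acceptance_rate elim: eventually_mono)
qed

end

theorem mainTheorem12:
  fixes hq hu :: "real \<Rightarrow> real \<Rightarrow> real"
    and \<pi> xq xu c \<theta> Q :: real
  assumes pi: "0 < \<pi>" "\<pi> < 1"
    and pay: "0 < xq" "0 < xu"
    and cut: "- xu < c" "c < xq"
    and pos: "\<forall>t g. 0 < hq t g" "\<forall>t g. 0 < hu t g"
    and dens_q: "integrable lborel (\<lambda>p::real \<times> real. hq (fst p) (snd p))"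
                "(LINT p|lborel. hq (fst p) (snd p)) = 1"
    and dens_u: "integrable lborel (\<lambda>p::real \<times> real. hu (fst p) (snd p))"
                "(LINT p|lborel. hu (fst p) (snd p)) = 1"
    and sect: "\<forall>t. integrable lborel (hq t)" "\<forall>t. integrable lborel (hu t)"
    and lcont: "continuous_on UNIV (\<lambda>p::real \<times> real. lr hq hu (fst p) (snd p))"
    and lmono1: "\<forall>g. strict_mono (\<lambda>t. lr hq hu t g)"
    and lmono2: "\<forall>t. strict_mono (lr hq hu t)"
    and linf: "\<forall>t. \<forall>\<epsilon>>0. \<exists>g. lr hq hu t g < \<epsilon>"
    and lsup: "\<forall>t. \<forall>M. \<exists>g. M < lr hq hu t g"
    and hphi: "phi hq hu \<pi> \<theta> < (xu + c) / (xq + xu)"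
    and hQ: "Q = 0 \<or> Q = 1"
  shows "\<exists>L. ((\<lambda>\<tau>. regret xq xu c Q (s1 hq hu \<pi> xq xu \<theta> \<tau>)) \<longlongrightarrow> L)
                (at_right (tau_star hq hu \<pi> xq xu \<theta>)) \<and>
             ((\<lambda>\<tau>. regret xq xu c Q (s2 hq hu \<pi> xq xu \<theta> \<tau>)) \<longlongrightarrow> L)
                (at_left (tau_star hq hu \<pi> xq xu \<theta>))"
proof -
  interpret mlr_screening hq hu \<pi> xq xu \<theta>
    using pi pay pos sect lmono2 isCont_section[OF lcont] linf lsup by unfold_locales auto
  have "0 < xq + xu" using pay by simp
  note regret_lim = regret_tendsto_at_right[OF this, where c=c and Q=Q]
  show ?thesis
    using filterlim_compose[OF regret_lim s1_filterlim_at_right]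
      filterlim_compose[OF regret_lim s2_filterlim_at_left] by blast
qed

end
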